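(* In the setting described in the context, fix $t\in\mathbb{Z}_+$ and $\delta\in(0,1)$, let $\widehat k$ be any element of $\mathop{\mathrm{argmin}}_{k\in[t]}\{\widehat\phi(t,k,\delta)+\widehat\psi(t,k,\delta)\}$, and suppose that (on some realization of the data) $|\widehat{\mu}_{t,k}-\mu_t|\le\phi(t,k)+\widehat\psi(t,k,\delta)$ holds for every $k\in[t]$. Then $$|\widehat\mu_{t,\widehat k}-\mu_t|\le 3\min_{k\in[t]}\big\{\phi(t,k)+\widehat\psi(t,k,\delta)\big\}.$$
   Context: Let $a<b$ be real numbers, $M=b-a$, and $t\in\mathbb{Z}_+$. For each $j\in[t]$ let $\mathcal{Q}_j$ be a probability distribution on $[a,b]$ with mean $\mu_j$, and let $B_j\ge 1$ be an integer; the data are $u_{j,i}\in[a,b]$, $j\in[t]$, $i\in[B_j]$ (with $u_{j,i}\sim\mathcal{Q}_j$ independent). For $k\in[t]$ define $B_{t,k}=\sum_{j=t-k+1}^t B_j$, $\widehat{\mu}_{t,k}=\frac{1}{B_{t,k}}\sum_{j=t-k+1}^t\sum_{i=1}^{B_j}u_{j,i}$, $\phi(t,k)=\max_{t-k+1\le j\le t}|\mu_j-\mu_t|$, when $B_{t,k}\ge2$, $\widehat v_{t,k}^2=\frac{1}{B_{t,k}-1}\sum_{j=t-k+1}^t\sum_{i=1}^{B_j}(u_{j,i}-\widehat\mu_{t,k})^2$ with $\widehat v_{t,k}\ge0$, and for $\delta\in(0,1)$ $$\widehat\psi(t,k,\delta)=\begin{cases} M, & B_{t,k}=1,\\ \widehat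 v_{t,k}\sqrt{\frac{2\log(2/\delta)}{B_{t,k}}}+\frac{8M\log(2/\delta)}{3(B_{t,k}-1)}, & B_{t,k}\ge 2,\end{cases}\qquad \widehat\phi(t,k,\delta)=\max_{i\in[k]}\Big(|\widehat\mu_{t,k}-\widehat\mu_{t,i}|-\big[\widehat\psi(t,k,\delta)+\widehat\psi(t,i,\delta)\big]\Big)_+,$$ where $x_+=\max\{x,0\}$. *)

theory Defs
  imports "HOL-Analysis.Analysis"
begin

text \<open>Data: batch sizes B j, observations u j i (j in {1..t}, i in {1..B j}),
  true means mu j. Windows consist of the k most recent periods t-k+1,...,t.\<close>

definition Btk :: "(nat \<Rightarrow> nat) \<Rightarrow> nat \<Rightarrow> nat \<Rightarrow> nat" where
  "Btk B t k = (\<Sum>j\<in>{t-k+1..t}. B j)"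

definition muhat :: "(nat \<Rightarrow> nat) \<Rightarrow> (nat \<Rightarrow> nat \<Rightarrow> real) \<Rightarrow> nat \<Rightarrow> nat \<Rightarrow> real" where
  "muhat B u t k = (\<Sum>j\<in>{t-k+1..t}. \<Sum>i\<in>{1..B j}. u j i) / real (Btk B t k)"

definition phi :: "(nat \<Rightarrow> real) \<Rightarrow> nat \<Rightarrow> nat \<Rightarrow> real" where
  "phi mu t k = Max ((\<lambda>j. \<bar>mu j - mu t\<bar>) ` {t-k+1..t})"

definition vhat :: "(nat \<Rightarrow> nat) \<Rightarrow> (nat \<Rightarrow> nat \<Rightarrow> real) \<Rightarrow> nat \<Rightarrow> nat \<Rightarrow> real" where
  "vhat B u t k = sqrt ((\<Sum>j\<in>{t-k+1..t}. \<Sum>i\<in>{1..B j}. (u j i - muhat B u t k)\<^sup>2)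
                        / (real (Btk B t k) - 1))"

definition psihat :: "real \<Rightarrow> (nat \<Rightarrow> nat) \<Rightarrow> (nat \<Rightarrow> nat \<Rightarrow> real) \<Rightarrow> nat \<Rightarrow> nat \<Rightarrow> real \<Rightarrow> real" where
  "psihat M B u t k \<delta> =
     (if Btk B t k = 1 then M
      else vhat B u t k * sqrt (2 * ln (2 / \<delta>) / real (Btk B t k))
           + 8 * M * ln (2 / \<delta>) / (3 * (real (Btk B t k) - 1)))"

definition phihat :: "real \<Rightarrow> (nat \<Rightarrow> nat) \<Rightarrow> (nat \<Rightarrow> nat \<Rightarrow> real) \<Rightarrow> nat \<Rightarrow> nat \<Rightarrow> real \<Rightarrow> real" where
  "phihat M B u t k \<delta> =
     Max ((\<lambda>i. max 0 (\<bar>muhat B u t k - muhat B u t i\<bar>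
                       - (psihat M B u t k \<delta> + psihat M B u t i \<delta>))) ` {1..k})"

end

theory Submission
  imports Defs
begin

text \<open>Let \<open>k'\<close> minimise \<open>phi + psihat\<close>. On the event, every pairwise test entering
  \<open>phihat k'\<close> compares two windows nested in the window of \<open>k'\<close>, so \<open>phihat k' \<le> 2 phi k'\<close>,
  and the selection rule gives \<open>phihat khat + psihat khat \<le> 2 phi k' + psihat k'\<close>.
  If \<open>khat \<le> k'\<close>, the event at \<open>khat\<close> and monotonicity of the drift \<open>phi\<close> in the window
  length conclude. If \<open>khat > k'\<close>, the test between \<open>khat\<close> and \<open>k'\<close> inside \<open>phihat khat\<close>
  bounds \<open>|muhat khat - muhat k'|\<close> by \<open>phihat khat + psihat khat + psihat k'\<close>, and the event
  at \<open>k'\<close> concludes.\<close>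

lemma phi_mono:
  assumes "1 \<le> i" "i \<le> k" "k \<le> t"
  shows "phi mu t i \<le> phi mu t k"
  unfolding phi_def
proof (rule Max_mono)
  show "(\<lambda>j. \<bar>mu j - mu t\<bar>) ` {t - i + 1..t} \<subseteq> (\<lambda>j. \<bar>mu j - mu t\<bar>) ` {t - k + 1..t}"
    using assms by (intro image_mono) auto
qed (use assms in auto)

lemma phi_nonneg:
  assumes "1 \<le> k" "k \<le> t"
  shows "0 \<le> phi mu t k"
proof -
  have "\<bar>mu t - mu t\<bar> \<le> phi mu t k"
    unfolding phi_def using assms by (intro Max_ge) auto
  then show ?thesis by simp
qed

lemma Btk_ge_last:
  assumes "1 \<le> k" "k \<le> t"
  shows "B t \<le> Btk B t k"
  unfolding Btk_def using assms by (intro member_le_sum) auto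

lemma psihat_nonneg:
  assumes "1 \<le> k" "k \<le> t" "1 \<le> B t" "0 \<le> M" "0 < \<delta>" "\<delta> \<le> 2"
  shows "0 \<le> psihat M B u t k \<delta>"
proof (cases "Btk B t k = 1")
  case True
  then show ?thesis unfolding psihat_def using assms by simp
next
  case False
  with Btk_ge_last[of k t B] assms have two_le: "2 \<le> real (Btk B t k)" by linarith
  have "0 \<le> ln (2 / \<delta>)" using assms by simp
  moreover have "0 \<le> vhat B u t k"
    unfolding vhat_def using two_le by (intro real_sqrt_ge_zero divide_nonneg_pos sum_nonneg) auto
  ultimately show ?thesis
    unfolding psihat_def using False two_le assms by (simp add: divide_nonneg_pos)
qed

lemma muhat_diff_le_phihat:
  assumes "1 \<le> i" "i \<le> k"
  shows "\<bar>muhat B u t k - muhat B u t i\<bar>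
           \<le> phihat M B u t k \<delta> + psihat M B u t k \<delta> + psihat M B u t i \<delta>"
proof -
  have "max 0 (\<bar>muhat B u t k - muhat B u t i\<bar> - (psihat M B u t k \<delta> + psihat M B u t i \<delta>))
          \<le> phihat M B u t k \<delta>"
    unfolding phihat_def using assms by (intro Max_ge) auto
  then show ?thesis by linarith
qed

lemma phihat_nonneg:
  assumes "1 \<le> k"
  shows "0 \<le> phihat M B u t k \<delta>"
proof -
  let ?g = "\<lambda>i. max 0 (\<bar>muhat B u t k - muhat B u t i\<bar> - (psihat M B u t k \<delta> + psihat M B u t i \<delta>))"
  have "?g k \<in> ?g ` {1..k}" using assms by (intro image_eqI[of _ _ k]) auto
  then have "?g k \<le> phihat M B u t k \<delta>"
    unfolding phihat_def by (intro Max_ge) auto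
  then show ?thesis by linarith
qed

lemma phihat_le_twice_phi:
  assumes "1 \<le> k" "k \<le> t"
    and event: "\<forall>k\<in>{1..t}. \<bar>muhat B u t k - mu t\<bar> \<le> phi mu t k + psihat M B u t k \<delta>"
  shows "phihat M B u t k \<delta> \<le> 2 * phi mu t k"
  unfolding phihat_def
proof (subst Max_le_iff; (intro ballI)?)
  fix x assume "x \<in> (\<lambda>i. max 0 (\<bar>muhat B u t k - muhat B u t i\<bar>
                        - (psihat M B u t k \<delta> + psihat M B u t i \<delta>))) ` {1..k}"
  then obtain i where i: "i \<in> {1..k}"
    and x: "x = max 0 (\<bar>muhat B u t k - muhat B u t i\<bar> - (psihat M B u t k \<delta> + psihat M B u t i \<delta>))"
    by blast
  have "\<bar>muhat B u t k - muhat B u t i\<bar> \<le> \<bar>muhat B u t k - mu t\<bar> + \<bar>muhat B u t i - mu t\<bar>"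
    by linarith
  moreover have "\<bar>muhat B u t k - mu t\<bar> \<le> phi mu t k + psihat M B u t k \<delta>"
    and "\<bar>muhat B u t i - mu t\<bar> \<le> phi mu t i + psihat M B u t i \<delta>"
    using event assms i by auto
  moreover have "phi mu t i \<le> phi mu t k" using phi_mono i assms by auto
  moreover have "0 \<le> phi mu t k" using phi_nonneg assms by blast
  ultimately show "x \<le> 2 * phi mu t k" unfolding x by linarith
qed (use assms in auto)

theorem mainTheorem5:
  fixes a b :: real and t :: nat and \<delta> :: real
    and B :: "nat \<Rightarrow> nat" and u :: "nat \<Rightarrow> nat \<Rightarrow> real" and mu :: "nat \<Rightarrow> real"
    and khat :: nat
  assumes ab: "a < b"
    and t_pos: "t \<ge> 1"
    and delta: "0 < \<delta>" "\<delta> < 1"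
    and B_pos: "\<forall>j\<in>{1..t}. B j \<ge> 1"
    and u_range: "\<forall>j\<in>{1..t}. \<forall>i\<in>{1..B j}. a \<le> u j i \<and> u j i \<le> b"
    and mu_range: "\<forall>j\<in>{1..t}. a \<le> mu j \<and> mu j \<le> b"
    and khat_mem: "khat \<in> {1..t}"
    and khat_min: "\<forall>k\<in>{1..t}. phihat (b - a) B u t khat \<delta> + psihat (b - a) B u t khat \<delta>
                               \<le> phihat (b - a) B u t k \<delta> + psihat (b - a) B u t k \<delta>"
    and event: "\<forall>k\<in>{1..t}. \<bar>muhat B u t k - mu t\<bar> \<le> phi mu t k + psihat (b - a) B u t k \<delta>"
  shows "\<bar>muhat B u t khat - mu t\<bar>
           \<le> 3 * Min ((\<lambda>k. phi mu t k + psihat (b - a) B u t k \<delta>) ` {1..t})"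
proof -
  let ?f = "\<lambda>k. phi mu t k + psihat (b - a) B u t k \<delta>"
  have "Min (?f ` {1..t}) \<in> ?f ` {1..t}" using t_pos by (intro Min_in) auto
  then obtain ks where ks: "ks \<in> {1..t}" and ks_min: "Min (?f ` {1..t}) = ?f ks" by blast
  have phihat_ks: "phihat (b - a) B u t ks \<delta> \<le> 2 * phi mu t ks"
    using ks event by (intro phihat_le_twice_phi) auto
  have selection: "phihat (b - a) B u t khat \<delta> + psihat (b - a) B u t khat \<delta>
                     \<le> phihat (b - a) B u t ks \<delta> + psihat (b - a) B u t ks \<delta>"
    using khat_min ks by blast
  have event_khat: "\<bar>muhat B u t khat - mu t\<bar> \<le> ?f khat"
    and event_ks: "\<bar>muhat B u t ks - mu t\<bar> \<le> ?f ks"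
    using event khat_mem ks by auto
  show ?thesis
  proof (cases "khat \<le> ks")
    case True
    then have "phi mu t khat \<le> phi mu t ks" using khat_mem ks by (intro phi_mono) auto
    moreover have "0 \<le> phihat (b - a) B u t khat \<delta>" using khat_mem by (intro phihat_nonneg) auto
    moreover have "0 \<le> psihat (b - a) B u t ks \<delta>" using ks B_pos ab delta by (intro psihat_nonneg) auto
    ultimately show ?thesis using ks_min phihat_ks selection event_khat by linarith
  next
    case False
    then have "\<bar>muhat B u t khat - muhat B u t ks\<bar>
        \<le> phihat (b - a) B u t khat \<delta> + psihat (b - a) B u t khat \<delta> + psihat (b - a) B u t ks \<delta>"
      using ks by (intro muhat_diff_le_phihat) auto
    then show ?thesis using ks_min phihat_ks selection event_ks by linarith
  qed
qed

end
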